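(* Let $G_{1,N}$ be a geometric random variable on $\{1,2,\dots\}$ with parameter $e^{-\lambda_NT_N}$, where $\lambda_NT_N=\beta\log(\kappa N)$ for constants $\kappa,\beta>0$. For $n\in\mathbb{N}$ let $$M_N(n)=E\Big[\Big(\frac{G_{1,N}}{G_{1,N}+N-1}\Big)^n\Big].$$ Then: \begin{enumerate} \item If $\beta>1$, $\lim_{N\to\infty}M_N(n)=1$. \item If $\beta=1$, $\lim_{N\to\infty}M_N(n)=E[Y_\kappa^n]$, where $Y_\kappa$ is a $[0,1]$-valued random variable with $\mathbb{P}(Y_\kappa>x)=e^{-\frac{x}{\kappa(1-x)}}$, $x\in[0,1]$. \item If $\beta<1$, $M_N(n)\sim n!\,\kappa^{n\beta}N^{-n(1-\beta)}$ as $N\to\infty$. \end{enumerate}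
   Context: A geometric random variable $G$ on $\{1,2,\dots\}$ with parameter $p$ satisfies $\mathbb{P}(G>k)=(1-p)^k$ for $k\ge0$. $f\sim g$ means $f/g\to1$. *)

theory Defs
  imports "HOL-Probability.Probability"
begin

definition geom_param :: "real \<Rightarrow> real \<Rightarrow> nat \<Rightarrow> real" where
  "geom_param \<kappa> \<beta> N = exp (- (\<beta> * ln (\<kappa> * real N)))"

text \<open>G = 1 + X with X ~ geometric_pmf p on {0,1,...}, so P(G > k) = (1-p)^k.
  M_N(n) = E[(G/(G+N-1))^n].\<close>
definition M :: "real \<Rightarrow> real \<Rightarrow> nat \<Rightarrow> nat \<Rightarrow> real" where
  "M \<kappa> \<beta> N n = measure_pmf.expectation (geometric_pmf (geom_param \<kappa> \<beta> N))
     (\<lambda>k. (real (k + 1) / (real (k + 1) + real N - 1)) ^ n)"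

end

theory Submission
  imports Defs
begin

(*
  By the layer-cake formula, M_N(n) is the integral over [0,1) of n x^(n-1) times the tail
  P(G/(G+N-1) > x), and this tail is exactly (1-p)^m with p = (kappa N)^(-beta) and
  m = floor (x (N-1) / (1-x)), hence close to exp (- p N x / (1-x)).

  If beta >= 1 then p N tends to S = 0 resp. S = 1/kappa, the tails are bounded by 1, and
  dominated convergence gives the integral of n x^(n-1) exp (- S x / (1-x)), which is 1 resp.
  the layer-cake expression of E[Y^n].

  If beta < 1 then s = p N tends to infinity.  Substituting x = u / s turns s^n M_N(n) into
  the integral over [0,oo) of n u^(n-1) P(G/(G+N-1) > u/s), whose integrand tends to
  n u^(n-1) exp (-u) and is dominated by a multiple of u^(n-1) exp (-u/2); the limit is n!.
*)

lemma integral_dominated_convergence_eventually: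
  fixes s :: "nat \<Rightarrow> 'a \<Rightarrow> real" and \<mu> :: "'a measure"
  assumes "f \<in> borel_measurable \<mu>" "\<And>i. s i \<in> borel_measurable \<mu>" "integrable \<mu> w"
    and lim: "AE x in \<mu>. (\<lambda>i. s i x) \<longlonglongrightarrow> f x"
    and bound: "\<forall>\<^sub>F i in sequentially. \<forall>x. \<bar>s i x\<bar> \<le> w x"
  shows "(\<lambda>i. integral\<^sup>L \<mu> (s i)) \<longlonglongrightarrow> integral\<^sup>L \<mu> f"
proof -
  obtain i0 where i0: "\<And>i. i0 \<le> i \<Longrightarrow> \<forall>x. \<bar>s i x\<bar> \<le> w x"
    using bound by (auto simp: eventually_sequentially)
  have "(\<lambda>i. integral\<^sup>L \<mu> (s (i + i0))) \<longlonglongrightarrow> integral\<^sup>L \<mu> f"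
  proof (rule integral_dominated_convergence[OF assms(1-3)])
    show "AE x in \<mu>. (\<lambda>i. s (i + i0) x) \<longlonglongrightarrow> f x"
      using lim by eventually_elim (rule LIMSEQ_ignore_initial_segment)
    show "AE x in \<mu>. norm (s (i + i0) x) \<le> w x" for i
      using i0[of "i + i0"] by auto
  qed
  then show ?thesis
    by (rule LIMSEQ_offset)
qed

lemma integrable_power_mult_exp_Ici:
  assumes "0 < c"
  shows "integrable lborel (\<lambda>u::real. indicator {0..} u * u ^ k * exp (- (c * u)))"
proof -
  have "integrable lborel (erlang_density k c)"
  proof (rule integrableI_nonneg)
    show "(\<integral>\<^sup>+ u. ennreal (erlang_density k c u) \<partial>lborel) < \<infinity>"
      using nn_integral_erlang_ith_moment[OF assms, of k 0] by simp
  qed (use assms in auto)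
  then have "integrable lborel (\<lambda>u. fact k / c ^ Suc k * erlang_density k c u)"
    by (rule integrable_mult_right)
  also have "(\<lambda>u. fact k / c ^ Suc k * erlang_density k c u) = (\<lambda>u. indicator {0..} u * u ^ k * exp (- (c * u)))"
    using assms by (auto simp: fun_eq_iff erlang_density_def indicator_def)
  finally show ?thesis .
qed

lemma integral_power_mult_exp_Ici:
  "(\<integral>u. indicator {0..} u * u ^ k * exp (- u) \<partial>lborel) = (fact k :: real)"
proof -
  have "(\<integral>\<^sup>+u. ennreal (indicator {0..} u * u ^ k * exp (- u)) \<partial>lborel)
      = (\<integral>\<^sup>+u. ennreal (u ^ k * exp (- u)) * indicator {0..} (u::real) \<partial>lborel)"
    by (intro nn_integral_cong) (auto simp: indicator_def)
  also have "\<dots> = ennreal (fact k)"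
    by (simp add: nn_intergal_power_times_exp_Ici)
  moreover have "(\<integral>u. indicator {0..} u * u ^ k * exp (- u) \<partial>lborel)
      = enn2real (\<integral>\<^sup>+u. ennreal (indicator {0..} u * u ^ k * exp (- u)) \<partial>lborel)"
    by (rule integral_eq_nn_integral) (auto simp: indicator_def intro!: AE_I2)
  ultimately show ?thesis
    by simp
qed

lemma borel_measurable_antimono:
  fixes f :: "real \<Rightarrow> real"
  assumes "antimono f"
  shows "f \<in> borel_measurable borel"
proof -
  have "mono (\<lambda>x. - f x)"
    using assms by (auto simp: mono_def antimono_def)
  from borel_measurable_uminus[OF borel_measurable_mono[OF this]] show ?thesis
    by simp
qed

lemma one_minus_power_le_exp:
  fixes p :: real
  assumes "0 \<le> p" "p < 1"
  shows "exp (- (p * real m / (1 - p))) \<le> (1 - p) ^ m" "(1 - p) ^ m \<le> exp (- (p * real m))"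
proof -
  have "1 - p \<le> exp (- p)"
    using exp_ge_add_one_self[of "- p"] by simp
  then have "(1 - p) ^ m \<le> exp (- p) ^ m"
    using assms by (intro power_mono) auto
  then show "(1 - p) ^ m \<le> exp (- (p * real m))"
    by (simp add: exp_of_nat_mult[symmetric] mult.commute)
  have "1 / (1 - p) \<le> exp (p / (1 - p))"
    using exp_ge_add_one_self[of "p / (1 - p)"] assms by (simp add: field_simps)
  then have "exp (- (p / (1 - p))) \<le> 1 - p"
    using assms by (simp add: exp_minus field_simps)
  then have "exp (- (p / (1 - p))) ^ m \<le> (1 - p) ^ m"
    by (intro power_mono) auto
  then show "exp (- (p * real m / (1 - p))) \<le> (1 - p) ^ m"
    by (simp add: exp_of_nat_mult[symmetric] field_simps)
qed

lemma tendsto_one_minus_power_exp: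
  fixes p t :: "nat \<Rightarrow> real" and m :: "nat \<Rightarrow> nat"
  assumes p: "p \<longlonglongrightarrow> 0" "\<forall>\<^sub>F N in sequentially. 0 \<le> p N \<and> p N < 1"
    and pt: "(\<lambda>N. p N * t N) \<longlonglongrightarrow> L"
    and m: "\<forall>\<^sub>F N in sequentially. t N - 1 \<le> real (m N) \<and> real (m N) \<le> t N"
  shows "(\<lambda>N. (1 - p N) ^ m N) \<longlonglongrightarrow> exp (- L)"
proof -
  have pm: "(\<lambda>N. p N * real (m N)) \<longlonglongrightarrow> L"
  proof (rule tendsto_sandwich)
    show "\<forall>\<^sub>F N in sequentially. p N * t N - p N \<le> p N * real (m N)"
      using p(2) m
    proof eventually_elim
      case (elim N)
      then have "p N * t N \<le> p N * (1 + real (m N))"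
        by (intro mult_left_mono) auto
      then show ?case
        by (simp add: algebra_simps)
    qed
    show "\<forall>\<^sub>F N in sequentially. p N * real (m N) \<le> p N * t N"
      using p(2) m by eventually_elim (auto intro!: mult_left_mono)
    show "(\<lambda>N. p N * t N - p N) \<longlonglongrightarrow> L"
      using tendsto_diff[OF pt p(1)] by simp
  qed (rule pt)
  show ?thesis
  proof (rule tendsto_sandwich)
    show "\<forall>\<^sub>F N in sequentially. exp (- (p N * real (m N) / (1 - p N))) \<le> (1 - p N) ^ m N"
      "\<forall>\<^sub>F N in sequentially. (1 - p N) ^ m N \<le> exp (- (p N * real (m N)))"
      using p(2) by (eventually_elim, simp add: one_minus_power_le_exp)+
    show "(\<lambda>N. exp (- (p N * real (m N) / (1 - p N)))) \<longlonglongrightarrow> exp (- L)"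
      using tendsto_exp[OF tendsto_minus[OF tendsto_divide[OF pm tendsto_diff[OF tendsto_const[of 1] p(1)]]]]
      by simp
    show "(\<lambda>N. exp (- (p N * real (m N)))) \<longlonglongrightarrow> exp (- L)"
      by (intro tendsto_intros pm)
  qed
qed

section \<open>Moments through tail probabilities\<close>

lemma ennreal_power_eq_nn_integral:
  fixes z :: real
  assumes "0 \<le> z" "1 \<le> n"
  shows "ennreal (z ^ n) = (\<integral>\<^sup>+x. ennreal (indicator {0..<z} x * (real n * x ^ (n - 1))) \<partial>lborel)"
proof -
  let ?f = "\<lambda>x::real. real n * x ^ (n - 1)"
  have deriv: "((\<lambda>x. x ^ n) has_vector_derivative ?f x) (at x within {0..z})" for x :: real
    using DERIV_pow[of n x "{0..z}"] by (simp add: has_real_derivative_iff_has_vector_derivative)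
  have cont: "continuous_on {0..z} ?f"
    by (intro continuous_intros)
  have FTC: "integral\<^sup>L lborel (\<lambda>x. indicator {0..z} x *\<^sub>R ?f x) = z ^ n"
    using integral_FTC_atLeastAtMost[OF assms(1) deriv cont] assms(2) by simp
  have int: "integrable lborel (\<lambda>x. indicator {0..z} x *\<^sub>R ?f x)"
    using borel_integrable_atLeastAtMost'[OF cont] unfolding set_integrable_def .
  have "(\<integral>\<^sup>+x. ennreal (indicator {0..<z} x * ?f x) \<partial>lborel)
      = (\<integral>\<^sup>+x. ennreal (indicator {0..z} x *\<^sub>R ?f x) \<partial>lborel)"
    using AE_lborel_singleton[of z]
    by (intro nn_integral_cong_AE) (auto elim!: eventually_mono simp: indicator_def)
  also have "\<dots> = ennreal (z ^ n)"
    using nn_integral_eq_integral[OF int] FTC by (simp add: indicator_def)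
  finally show ?thesis ..
qed

definition moment_integrand :: "nat \<Rightarrow> (real \<Rightarrow> real) \<Rightarrow> real \<Rightarrow> real" where
  "moment_integrand n Q x = indicator {0..<1} x * (real n * x ^ (n - 1)) * Q x"

lemma borel_measurable_moment_integrand:
  assumes [measurable]: "Q \<in> borel_measurable borel"
  shows "moment_integrand n Q \<in> borel_measurable borel"
  unfolding moment_integrand_def[abs_def] by measurable

lemma abs_moment_integrand_le:
  assumes "0 \<le> Q x" "Q x \<le> 1"
  shows "\<bar>moment_integrand n Q x\<bar> \<le> real n * indicator {0..1} x"
proof (cases "x \<in> {0..<1}")
  case True
  then have "0 \<le> x ^ (n - 1) * Q x" "x ^ (n - 1) * Q x \<le> 1"
    using assms by (auto intro!: mult_le_one power_le_one)
  then have "real n * (x ^ (n - 1) * Q x) \<le> real n"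
    by (intro mult_left_le) auto
  moreover have "moment_integrand n Q x = real n * (x ^ (n - 1) * Q x)"
    using True by (simp add: moment_integrand_def)
  moreover have "indicator {0..1} x = (1::real)"
    using True by simp
  ultimately show ?thesis
    using \<open>0 \<le> x ^ (n - 1) * Q x\<close> by simp
next
  case False
  then show ?thesis
    by (simp add: moment_integrand_def)
qed

lemma nn_integral_power_eq_nn_integral_tail:
  fixes Z :: "'a \<Rightarrow> real"
  assumes "prob_space P" and [measurable]: "Z \<in> borel_measurable P"
    and Z: "\<And>\<omega>. \<omega> \<in> space P \<Longrightarrow> 0 \<le> Z \<omega> \<and> Z \<omega> \<le> 1" and n: "1 \<le> n"
  shows "(\<integral>\<^sup>+\<omega>. ennreal (Z \<omega> ^ n) \<partial>P)
    = (\<integral>\<^sup>+x. ennreal (moment_integrand n (\<lambda>x. measure P {\<omega>\<in>space P. x < Z \<omega>}) x) \<partial>lborel)"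
proof -
  interpret prob_space P by fact
  interpret pair_sigma_finite lborel P
    by (intro pair_sigma_finite.intro lborel.sigma_finite_measure_axioms) unfold_locales
  let ?f = "\<lambda>x::real. real n * x ^ (n - 1)"
  have "(\<integral>\<^sup>+\<omega>. ennreal (Z \<omega> ^ n) \<partial>P) = (\<integral>\<^sup>+\<omega>. (\<integral>\<^sup>+x. ennreal (indicator {0..<Z \<omega>} x * ?f x) \<partial>lborel) \<partial>P)"
    using Z n by (intro nn_integral_cong ennreal_power_eq_nn_integral) auto
  also have "\<dots> = (\<integral>\<^sup>+x. (\<integral>\<^sup>+\<omega>. ennreal (indicator {0..<Z \<omega>} x * ?f x) \<partial>P) \<partial>lborel)"
  proof (rule Fubini')
    have "(\<lambda>(x, \<omega>). ennreal (indicator {0..<Z \<omega>} x * ?f x))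
       = (\<lambda>(x, \<omega>). ennreal (if 0 \<le> x \<and> x < Z \<omega> then ?f x else 0))"
      by (auto simp: indicator_def fun_eq_iff)
    also have "\<dots> \<in> borel_measurable (lborel \<Otimes>\<^sub>M P)"
      by measurable
    finally show "(\<lambda>(x, \<omega>). ennreal (indicator {0..<Z \<omega>} x * ?f x)) \<in> borel_measurable (lborel \<Otimes>\<^sub>M P)" .
  qed
  also have "\<dots> = (\<integral>\<^sup>+x. ennreal (moment_integrand n (\<lambda>x. measure P {\<omega>\<in>space P. x < Z \<omega>}) x) \<partial>lborel)"
  proof (intro nn_integral_cong)
    fix x :: real
    have "(\<integral>\<^sup>+\<omega>. ennreal (indicator {0..<Z \<omega>} x * ?f x) \<partial>P)
        = (\<integral>\<^sup>+\<omega>. ennreal (indicator {0..<1} x * ?f x) * indicator {\<omega>\<in>space P. x < Z \<omega>} \<omega> \<partial>P)"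
    proof (intro nn_integral_cong)
      fix \<omega> assume "\<omega> \<in> space P"
      then show "ennreal (indicator {0..<Z \<omega>} x * ?f x)
          = ennreal (indicator {0..<1} x * ?f x) * indicator {\<omega>\<in>space P. x < Z \<omega>} \<omega>"
        using Z[of \<omega>] by (auto simp: indicator_def)
    qed
    also have "\<dots> = ennreal (indicator {0..<1} x * ?f x) * emeasure P {\<omega>\<in>space P. x < Z \<omega>}"
      by (rule nn_integral_cmult_indicator) measurable
    also have "\<dots> = ennreal (moment_integrand n (\<lambda>x. measure P {\<omega>\<in>space P. x < Z \<omega>}) x)"
      unfolding emeasure_eq_measure
      by (subst ennreal_mult[symmetric]) (auto simp: moment_integrand_def indicator_def)
    finally show "(\<integral>\<^sup>+\<omega>. ennreal (indicator {0..<Z \<omega>} x * ?f x) \<partial>P)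
      = ennreal (moment_integrand n (\<lambda>x. measure P {\<omega>\<in>space P. x < Z \<omega>}) x)" .
  qed
  finally show ?thesis .
qed

lemma moment_eq_integral_tail:
  fixes Z :: "'a \<Rightarrow> real"
  assumes P: "prob_space P" and [measurable]: "Z \<in> borel_measurable P"
    and Z: "\<And>\<omega>. \<omega> \<in> space P \<Longrightarrow> 0 \<le> Z \<omega> \<and> Z \<omega> \<le> 1" and n: "1 \<le> n"
  shows "(\<integral>\<omega>. Z \<omega> ^ n \<partial>P) = (\<integral>x. moment_integrand n (\<lambda>x. measure P {\<omega>\<in>space P. x < Z \<omega>}) x \<partial>lborel)"
proof -
  interpret prob_space P by fact
  define H where "H = moment_integrand n (\<lambda>x. measure P {\<omega>\<in>space P. x < Z \<omega>})"
  have nn_eq: "(\<integral>\<^sup>+\<omega>. ennreal (Z \<omega> ^ n) \<partial>P) = (\<integral>\<^sup>+x. ennreal (H x) \<partial>lborel)"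
    unfolding H_def using assms by (rule nn_integral_power_eq_nn_integral_tail)
  have H_meas: "H \<in> borel_measurable lborel"
    unfolding H_def measurable_lborel2
    by (intro borel_measurable_moment_integrand borel_measurable_antimono)
       (auto simp: antimono_def intro!: finite_measure_mono)
  have H_nonneg: "0 \<le> H x" for x
    by (simp add: H_def moment_integrand_def indicator_def)
  have "integrable P (\<lambda>\<omega>. Z \<omega> ^ n)"
    by (rule integrable_const_bound[where B=1]) (use Z in \<open>auto intro!: power_le_one\<close>)
  then have Z_eq: "(\<integral>\<^sup>+\<omega>. ennreal (Z \<omega> ^ n) \<partial>P) = ennreal (\<integral>\<omega>. Z \<omega> ^ n \<partial>P)"
    using Z by (intro nn_integral_eq_integral) auto
  have "integrable lborel H"
    using H_meas H_nonneg by (intro integrableI_nonneg) (simp_all add: nn_eq[symmetric] Z_eq)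
  then have "(\<integral>\<^sup>+x. ennreal (H x) \<partial>lborel) = ennreal (integral\<^sup>L lborel H)"
    using H_nonneg by (intro nn_integral_eq_integral) auto
  with nn_eq Z_eq have "ennreal (\<integral>\<omega>. Z \<omega> ^ n \<partial>P) = ennreal (integral\<^sup>L lborel H)"
    by simp
  moreover have "0 \<le> (\<integral>\<omega>. Z \<omega> ^ n \<partial>P)"
    using Z by (intro integral_nonneg_AE AE_I2) auto
  moreover have "0 \<le> integral\<^sup>L lborel H"
    using H_nonneg by (intro integral_nonneg_AE AE_I2) auto
  ultimately show ?thesis
    unfolding H_def using ennreal_inj by blast
qed

lemma integral_moment_integrand_1:
  assumes "1 \<le> n"
  shows "(\<integral>x. moment_integrand n (\<lambda>_. 1) x \<partial>lborel) = 1"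
proof -
  let ?P = "measure_pmf (return_pmf ())"
  have "(\<integral>x. moment_integrand n (\<lambda>_. 1) x \<partial>lborel)
      = (\<integral>x. moment_integrand n (\<lambda>x. measure ?P {\<omega>\<in>space ?P. x < 1}) x \<partial>lborel)"
    by (intro Bochner_Integration.integral_cong) (auto simp: moment_integrand_def indicator_def)
  also have "\<dots> = (\<integral>\<omega>. 1 ^ n \<partial>?P)"
    by (rule moment_eq_integral_tail[symmetric]) (use assms measure_pmf.prob_space_axioms in auto)
  finally show ?thesis by simp
qed

definition ratio_tail :: "real \<Rightarrow> nat \<Rightarrow> real \<Rightarrow> real" where
  "ratio_tail p N x =
     measure_pmf.prob (geometric_pmf p) {k. x < real (k + 1) / (real (k + 1) + real N - 1)}"

lemma ratio_tail_nonneg: "0 \<le> ratio_tail p N x"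
  and ratio_tail_le_1: "ratio_tail p N x \<le> 1"
  by (simp_all add: ratio_tail_def)

lemma borel_measurable_ratio_tail [measurable]: "ratio_tail p N \<in> borel_measurable borel"
  by (rule borel_measurable_antimono)
     (auto simp: ratio_tail_def antimono_def intro!: measure_pmf.finite_measure_mono)

lemma ratio_tail_eq_0:
  assumes "1 \<le> N" "1 \<le> x"
  shows "ratio_tail p N x = 0"
proof -
  have "real (k + 1) / (real (k + 1) + real N - 1) \<le> 1" for k
    using assms by (simp add: divide_le_eq_1)
  then have "{k. x < real (k + 1) / (real (k + 1) + real N - 1)} = {}"
    using assms(2) by (auto simp: not_less intro: order_trans)
  then show ?thesis
    by (simp add: ratio_tail_def)
qed

lemma M_eq_integral_ratio_tail:
  assumes "1 \<le> N" "1 \<le> n"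
  shows "M \<kappa> \<beta> N n = (\<integral>x. moment_integrand n (ratio_tail (geom_param \<kappa> \<beta> N) N) x \<partial>lborel)"
proof -
  let ?P = "measure_pmf (geometric_pmf (geom_param \<kappa> \<beta> N))"
  let ?Z = "\<lambda>k::nat. real (k + 1) / (real (k + 1) + real N - 1)"
  have "0 \<le> ?Z k \<and> ?Z k \<le> 1" for k
    using assms by (simp add: divide_le_eq_1)
  then have "(\<integral>k. ?Z k ^ n \<partial>?P) = (\<integral>x. moment_integrand n (\<lambda>x. measure ?P {k\<in>space ?P. x < ?Z k}) x \<partial>lborel)"
    using assms by (intro moment_eq_integral_tail measure_pmf.prob_space_axioms) auto
  then show ?thesis
    by (simp add: M_def ratio_tail_def[abs_def])
qed

lemma prob_geometric_pmf_atLeast: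
  assumes "0 < p" "p \<le> 1"
  shows "measure_pmf.prob (geometric_pmf p) {m..} = (1 - p) ^ m"
proof -
  have "measure_pmf.prob (geometric_pmf p) {..<m} = (\<Sum>k<m. (1 - p) ^ k * p)"
    using assms by (subst measure_measure_pmf_finite) auto
  also have "\<dots> = 1 - (1 - p) ^ m"
    by (induction m) (auto simp: algebra_simps)
  moreover have "{m..} = space (measure_pmf (geometric_pmf p)) - {..<m}"
    by auto
  ultimately show ?thesis
    using measure_pmf.prob_compl[of "{..<m}" "geometric_pmf p"] by simp
qed

lemma ratio_tail_eq_power:
  assumes "1 \<le> N" "0 \<le> x" "x < 1" "0 < p" "p \<le> 1"
  shows "ratio_tail p N x = (1 - p) ^ nat \<lfloor>x * (real N - 1) / (1 - x)\<rfloor>"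
proof -
  have "x < real (k + 1) / (real (k + 1) + real N - 1) \<longleftrightarrow> nat \<lfloor>x * (real N - 1) / (1 - x)\<rfloor> \<le> k"
    for k
  proof -
    have "x < real (k + 1) / (real (k + 1) + real N - 1) \<longleftrightarrow> x * (real (k + 1) + real N - 1) < real (k + 1)"
      using assms by (simp add: less_divide_eq)
    also have "\<dots> \<longleftrightarrow> x * (real N - 1) < real (k + 1) * (1 - x)"
      by (simp add: algebra_simps)
    also have "\<dots> \<longleftrightarrow> x * (real N - 1) / (1 - x) < 1 + real k"
      using assms by (simp add: divide_less_eq)
    also have "\<dots> \<longleftrightarrow> nat \<lfloor>x * (real N - 1) / (1 - x)\<rfloor> \<le> k"
      by linarith
    finally show ?thesis .
  qed
  then have "{k. x < real (k + 1) / (real (k + 1) + real N - 1)} = {nat \<lfloor>x * (real N - 1) / (1 - x)\<rfloor>..}"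
    by auto
  then show ?thesis
    using assms by (simp add: ratio_tail_def prob_geometric_pmf_atLeast)
qed

lemma ratio_tail_le_exp:
  assumes "1 \<le> N" "0 \<le> x" "x < 1" "0 < p" "p < 1"
  shows "ratio_tail p N x \<le> exp (- (p * (x * (real N - 1) / (1 - x) - 1)))"
proof -
  define t where "t = x * (real N - 1) / (1 - x)"
  have "0 \<le> t"
    using assms by (simp add: t_def)
  then have "t - 1 \<le> real (nat \<lfloor>t\<rfloor>)"
    by linarith
  have "ratio_tail p N x = (1 - p) ^ nat \<lfloor>t\<rfloor>"
    unfolding t_def using assms by (intro ratio_tail_eq_power) auto
  also have "\<dots> \<le> exp (- (p * real (nat \<lfloor>t\<rfloor>)))"
    using assms by (intro one_minus_power_le_exp) auto
  also have "\<dots> \<le> exp (- (p * (t - 1)))"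
    using \<open>t - 1 \<le> real (nat \<lfloor>t\<rfloor>)\<close> assms by (simp add: mult_left_mono)
  finally show ?thesis
    by (simp add: t_def)
qed

lemma ratio_tail_tendsto_exp:
  fixes p x :: "nat \<Rightarrow> real"
  assumes p: "p \<longlonglongrightarrow> 0" "\<And>N. 0 < p N"
    and x: "\<forall>\<^sub>F N in sequentially. 0 \<le> x N \<and> x N < 1"
    and lim: "(\<lambda>N. p N * (real N - 1) * (x N / (1 - x N))) \<longlonglongrightarrow> L"
  shows "(\<lambda>N. ratio_tail (p N) N (x N)) \<longlonglongrightarrow> exp (- L)"
proof -
  define t where "t N = x N * (real N - 1) / (1 - x N)" for N
  have p_lt_1: "\<forall>\<^sub>F N in sequentially. p N < 1"
    using order_tendstoD(2)[OF p(1), of 1] by simp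
  have "(\<lambda>N. (1 - p N) ^ nat \<lfloor>t N\<rfloor>) \<longlonglongrightarrow> exp (- L)"
  proof (rule tendsto_one_minus_power_exp[OF p(1)])
    show "\<forall>\<^sub>F N in sequentially. 0 \<le> p N \<and> p N < 1"
      using p_lt_1 by eventually_elim (simp add: less_imp_le p(2))
    have "\<forall>\<^sub>F N in sequentially. p N * (real N - 1) * (x N / (1 - x N)) = p N * t N"
      by (simp add: t_def)
    with lim show "(\<lambda>N. p N * t N) \<longlonglongrightarrow> L"
      by (rule Lim_transform_eventually)
    show "\<forall>\<^sub>F N in sequentially. t N - 1 \<le> real (nat \<lfloor>t N\<rfloor>) \<and> real (nat \<lfloor>t N\<rfloor>) \<le> t N"
      using x eventually_ge_at_top[of 1]
    proof eventually_elim
      case (elim N)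
      then have "0 \<le> t N"
        by (simp add: t_def)
      then show ?case
        by linarith
    qed
  qed
  moreover have "\<forall>\<^sub>F N in sequentially. (1 - p N) ^ nat \<lfloor>t N\<rfloor> = ratio_tail (p N) N (x N)"
    using x eventually_ge_at_top[of 1] p_lt_1
    by eventually_elim (simp add: ratio_tail_eq_power t_def p(2) less_imp_le)
  ultimately show ?thesis
    by (rule Lim_transform_eventually)
qed

lemma geom_param_pos: "0 < geom_param \<kappa> \<beta> N"
  by (simp add: geom_param_def)

lemma geom_param_eq_powr:
  assumes "0 < \<kappa>" "0 < N"
  shows "geom_param \<kappa> \<beta> N = (\<kappa> * real N) powr (- \<beta>)"
  using assms by (simp add: geom_param_def powr_def)

lemma geom_param_mult_N:
  assumes "0 < \<kappa>" "0 < N"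
  shows "geom_param \<kappa> \<beta> N * real N = \<kappa> powr (- \<beta>) * real N powr (1 - \<beta>)"
  using assms by (simp add: geom_param_eq_powr powr_mult powr_diff powr_minus field_simps)

lemma geom_param_tendsto_0:
  assumes "0 < \<kappa>" "0 < \<beta>"
  shows "geom_param \<kappa> \<beta> \<longlonglongrightarrow> 0"
proof -
  have "filterlim (\<lambda>N. \<kappa> * real N) at_top sequentially"
    using assms by (intro filterlim_tendsto_pos_mult_at_top[OF tendsto_const] filterlim_real_sequentially)
  then have "(\<lambda>N. (\<kappa> * real N) powr (- \<beta>)) \<longlonglongrightarrow> 0"
    using assms by (intro tendsto_neg_powr) auto
  moreover have "\<forall>\<^sub>F N in sequentially. (\<kappa> * real N) powr (- \<beta>) = geom_param \<kappa> \<beta> N"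
    using eventually_gt_at_top[of 0] by eventually_elim (use assms in \<open>simp add: geom_param_eq_powr\<close>)
  ultimately show ?thesis
    by (rule Lim_transform_eventually)
qed

section \<open>The cases \<open>\<beta> \<ge> 1\<close>\<close>

lemma M_tendsto_of_scaled_param_tendsto:
  assumes "0 < \<kappa>" "0 < \<beta>" "1 \<le> n"
    and S: "(\<lambda>N. geom_param \<kappa> \<beta> N * real N) \<longlonglongrightarrow> S"
  shows "(\<lambda>N. M \<kappa> \<beta> N n) \<longlonglongrightarrow> (\<integral>x. moment_integrand n (\<lambda>x. exp (- (S * (x / (1 - x))))) x \<partial>lborel)"
proof -
  let ?Q = "\<lambda>N. ratio_tail (geom_param \<kappa> \<beta> N) N"
  have p0: "geom_param \<kappa> \<beta> \<longlonglongrightarrow> 0"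
    using assms(1,2) by (rule geom_param_tendsto_0)
  have "(\<lambda>N. \<integral>x. moment_integrand n (?Q N) x \<partial>lborel)
      \<longlonglongrightarrow> (\<integral>x. moment_integrand n (\<lambda>x. exp (- (S * (x / (1 - x))))) x \<partial>lborel)"
  proof (rule integral_dominated_convergence_eventually[where w = "\<lambda>x::real. real n * indicator {0..1} x"])
    show "moment_integrand n (\<lambda>x. exp (- (S * (x / (1 - x))))) \<in> borel_measurable lborel"
      unfolding moment_integrand_def[abs_def] by measurable
    show "moment_integrand n (?Q N) \<in> borel_measurable lborel" for N
      unfolding measurable_lborel2 by (intro borel_measurable_moment_integrand borel_measurable_ratio_tail)
    show "integrable lborel (\<lambda>x::real. real n * indicator {0..1} x)"
      by (intro integrable_mult_right integrable_real_indicator) auto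
    show "\<forall>\<^sub>F N in sequentially. \<forall>x. \<bar>moment_integrand n (?Q N) x\<bar> \<le> real n * indicator {0..1} x"
      by (intro always_eventually allI abs_moment_integrand_le ratio_tail_nonneg ratio_tail_le_1)
    show "AE x in lborel. (\<lambda>N. moment_integrand n (?Q N) x)
        \<longlonglongrightarrow> moment_integrand n (\<lambda>x. exp (- (S * (x / (1 - x))))) x"
    proof (rule AE_I2)
      fix x :: real
      show "(\<lambda>N. moment_integrand n (?Q N) x) \<longlonglongrightarrow> moment_integrand n (\<lambda>x. exp (- (S * (x / (1 - x))))) x"
      proof (cases "x \<in> {0..<1}")
        case True
        have "(\<lambda>N. geom_param \<kappa> \<beta> N * (real N - 1) * (x / (1 - x))) \<longlonglongrightarrow> (S - 0) * (x / (1 - x))"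
          unfolding right_diff_distrib mult_1_right by (intro tendsto_intros S p0)
        then have "(\<lambda>N. ?Q N x) \<longlonglongrightarrow> exp (- (S * (x / (1 - x))))"
          using True by (intro ratio_tail_tendsto_exp[OF p0 geom_param_pos]) auto
        then show ?thesis
          unfolding moment_integrand_def by (rule tendsto_mult_left)
      qed (simp add: moment_integrand_def)
    qed
  qed
  moreover have "\<forall>\<^sub>F N in sequentially. (\<integral>x. moment_integrand n (?Q N) x \<partial>lborel) = M \<kappa> \<beta> N n"
    using eventually_ge_at_top[of 1]
    by eventually_elim (use assms(3) in \<open>simp add: M_eq_integral_ratio_tail\<close>)
  ultimately show ?thesis
    by (rule Lim_transform_eventually)
qed

lemma M_0 [simp]: "M \<kappa> \<beta> N 0 = 1"
  by (simp add: M_def)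

lemma M_tendsto_1:
  assumes "0 < \<kappa>" "1 < \<beta>"
  shows "(\<lambda>N. M \<kappa> \<beta> N n) \<longlonglongrightarrow> 1"
proof (cases "n = 0")
  case False
  have "(\<lambda>N. \<kappa> powr (- \<beta>) * real N powr (1 - \<beta>)) \<longlonglongrightarrow> \<kappa> powr (- \<beta>) * 0"
    using assms by (intro tendsto_intros tendsto_neg_powr filterlim_real_sequentially) auto
  moreover have "\<forall>\<^sub>F N in sequentially. \<kappa> powr (- \<beta>) * real N powr (1 - \<beta>) = geom_param \<kappa> \<beta> N * real N"
    using eventually_gt_at_top[of 0] by eventually_elim (simp add: geom_param_mult_N assms)
  ultimately have "(\<lambda>N. geom_param \<kappa> \<beta> N * real N) \<longlonglongrightarrow> 0"
    using Lim_transform_eventually by fastforce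
  then have "(\<lambda>N. M \<kappa> \<beta> N n) \<longlonglongrightarrow> (\<integral>x. moment_integrand n (\<lambda>x. exp (- (0 * (x / (1 - x))))) x \<partial>lborel)"
    using assms False by (intro M_tendsto_of_scaled_param_tendsto) auto
  then show ?thesis
    using False by (simp add: integral_moment_integrand_1)
qed simp

lemma M_tendsto_moment:
  fixes Y :: "'a \<Rightarrow> real"
  assumes "0 < \<kappa>" and P: "prob_space P" and Y: "Y \<in> borel_measurable P"
    and Y_range: "\<And>\<omega>. \<omega> \<in> space P \<Longrightarrow> 0 \<le> Y \<omega> \<and> Y \<omega> \<le> 1"
    and Y_tail: "\<And>x. 0 \<le> x \<Longrightarrow> x < 1 \<Longrightarrow> measure P {\<omega>\<in>space P. x < Y \<omega>} = exp (- (x / (\<kappa> * (1 - x))))"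
  shows "(\<lambda>N. M \<kappa> 1 N n) \<longlonglongrightarrow> (\<integral>\<omega>. Y \<omega> ^ n \<partial>P)"
proof (cases "n = 0")
  case True
  then show ?thesis
    using prob_space.prob_space[OF P] by simp
next
  case False
  have "\<forall>\<^sub>F N in sequentially. inverse \<kappa> = geom_param \<kappa> 1 N * real N"
    using eventually_gt_at_top[of 0] by eventually_elim (use assms(1) in \<open>simp add: geom_param_mult_N powr_minus\<close>)
  then have "(\<lambda>N. geom_param \<kappa> 1 N * real N) \<longlonglongrightarrow> inverse \<kappa>"
    by (rule Lim_transform_eventually[OF tendsto_const])
  from M_tendsto_of_scaled_param_tendsto[OF _ _ _ this]
  have "(\<lambda>N. M \<kappa> 1 N n) \<longlonglongrightarrow> (\<integral>x. moment_integrand n (\<lambda>x. exp (- (inverse \<kappa> * (x / (1 - x))))) x \<partial>lborel)"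
    using assms False by simp
  also have "(\<integral>x. moment_integrand n (\<lambda>x. exp (- (inverse \<kappa> * (x / (1 - x))))) x \<partial>lborel)
      = (\<integral>x. moment_integrand n (\<lambda>x. measure P {\<omega>\<in>space P. x < Y \<omega>}) x \<partial>lborel)"
  proof (intro Bochner_Integration.integral_cong refl)
    fix x :: real
    have "x \<in> {0..<1} \<Longrightarrow> exp (- (inverse \<kappa> * (x / (1 - x)))) = measure P {\<omega>\<in>space P. x < Y \<omega>}"
      by (simp add: Y_tail field_simps)
    then show "moment_integrand n (\<lambda>x. exp (- (inverse \<kappa> * (x / (1 - x))))) x
        = moment_integrand n (\<lambda>x. measure P {\<omega>\<in>space P. x < Y \<omega>}) x"
      by (cases "x \<in> {0..<1}") (simp_all add: moment_integrand_def)
  qed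
  also have "\<dots> = (\<integral>\<omega>. Y \<omega> ^ n \<partial>P)"
    using False by (intro moment_eq_integral_tail[symmetric] P Y Y_range) auto
  finally show ?thesis .
qed

section \<open>The case \<open>\<beta> < 1\<close>\<close>

lemma integral_moment_integrand_rescale:
  assumes s: "0 < s" and n: "1 \<le> n" and Q: "\<And>x. 1 \<le> x \<Longrightarrow> Q x = 0"
  shows "s ^ n * (\<integral>x. moment_integrand n Q x \<partial>lborel)
       = (\<integral>u. indicator {0..} u * (real n * u ^ (n - 1)) * Q (u / s) \<partial>lborel)"
proof -
  have affine: "(\<integral>x. moment_integrand n Q x \<partial>lborel) = (1 / s) * (\<integral>u. moment_integrand n Q (u / s) \<partial>lborel)"
    using lborel_integral_real_affine[of "1 / s" "moment_integrand n Q" 0] s by simp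
  have pointwise: "s ^ n * (1 / s) * moment_integrand n Q (u / s)
      = indicator {0..} u * (real n * u ^ (n - 1)) * Q (u / s)" for u
  proof -
    consider "u < 0" | "0 \<le> u" "u < s" | "s \<le> u"
      by linarith
    then show ?thesis
    proof cases
      case 1
      then have "u / s < 0"
        using s by (simp add: divide_neg_pos)
      with 1 show ?thesis
        by (simp add: moment_integrand_def)
    next
      case 2
      have "s ^ n * (1 / s) = s ^ (n - 1)"
        using s n by (simp add: power_eq_if)
      with 2 s show ?thesis
        by (simp add: moment_integrand_def power_divide)
    next
      case 3
      then have "1 \<le> u / s"
        using s by simp
      then show ?thesis
        by (simp add: moment_integrand_def Q)
    qed
  qed
  have "s ^ n * (\<integral>x. moment_integrand n Q x \<partial>lborel)
      = (\<integral>u. s ^ n * (1 / s) * moment_integrand n Q (u / s) \<partial>lborel)"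
    unfolding affine integral_mult_right_zero by (simp only: mult.assoc)
  also have "\<dots> = (\<integral>u. indicator {0..} u * (real n * u ^ (n - 1)) * Q (u / s) \<partial>lborel)"
    by (simp only: pointwise)
  finally show ?thesis .
qed

lemma ratio_tail_rescaled_le_exp:
  assumes p: "0 < p" "p < 1" and N: "2 \<le> N" and u: "0 \<le> u"
  shows "ratio_tail p N (u / (p * real N)) \<le> exp (1 - u / 2)"
proof (cases "u < p * real N")
  case True
  define s where "s = p * real N"
  have "0 < s" "u < s"
    using p N True by (simp_all add: s_def)
  have "u * 2 \<le> u * real N"
    using N u by (intro mult_left_mono) auto
  then have "u / 2 \<le> u * (real N - 1) / real N"
    using N by (simp add: field_simps)
  also have "\<dots> = p * (u * (real N - 1) / s)"
    using p N by (simp add: s_def)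
  also have "\<dots> \<le> p * (u * (real N - 1) / (s - u))"
    using p N u \<open>u < s\<close> by (intro mult_left_mono divide_left_mono) auto
  also have "\<dots> = p * (u / s * (real N - 1) / (1 - u / s))"
    using \<open>0 < s\<close> \<open>u < s\<close> by (simp add: field_simps)
  finally have "- (p * (u / s * (real N - 1) / (1 - u / s) - 1)) \<le> 1 - u / 2"
    using p(2) unfolding right_diff_distrib mult_1_right by linarith
  moreover have "ratio_tail p N (u / s) \<le> exp (- (p * (u / s * (real N - 1) / (1 - u / s) - 1)))"
    using N u p \<open>0 < s\<close> \<open>u < s\<close> by (intro ratio_tail_le_exp) auto
  ultimately show ?thesis
    unfolding s_def by (meson exp_le_cancel_iff order_trans)
next
  case False
  then have "ratio_tail p N (u / (p * real N)) = 0"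
    using p N by (intro ratio_tail_eq_0) auto
  then show ?thesis
    by simp
qed

lemma abs_rescaled_integrand_le:
  assumes "0 < p" "p < 1" "2 \<le> N"
  shows "\<bar>indicator {0..} u * (real n * u ^ (n - 1)) * ratio_tail p N (u / (p * real N))\<bar>
    \<le> exp 1 * real n * (indicator {0..} u * u ^ (n - 1) * exp (- (1 / 2 * u)))"
proof (cases "0 \<le> u")
  case True
  have "ratio_tail p N (u / (p * real N)) \<le> exp (1 - u / 2)"
    using assms True by (rule ratio_tail_rescaled_le_exp)
  then have "real n * u ^ (n - 1) * ratio_tail p N (u / (p * real N)) \<le> real n * u ^ (n - 1) * exp (1 - u / 2)"
    using True by (intro mult_left_mono) auto
  moreover have "exp (1 - u / 2) = exp 1 * exp (- (1 / 2 * u))"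
    by (subst exp_add[symmetric]) simp
  ultimately show ?thesis
    using True by (simp add: ratio_tail_nonneg mult_ac)
qed simp

lemma scaled_power_M_eq_integral:
  fixes \<kappa> \<beta> :: real
  assumes "1 \<le> N" "1 \<le> n"
  defines "p \<equiv> geom_param \<kappa> \<beta> N"
  shows "(p * real N) ^ n * M \<kappa> \<beta> N n
    = (\<integral>u. indicator {0..} u * (real n * u ^ (n - 1)) * ratio_tail p N (u / (p * real N)) \<partial>lborel)"
  unfolding M_eq_integral_ratio_tail[OF assms(1,2)] p_def[symmetric]
  using assms geom_param_pos[of \<kappa> \<beta> N]
  by (intro integral_moment_integrand_rescale ratio_tail_eq_0) (auto simp: p_def)

lemma ratio_tail_rescaled_tendsto:
  fixes p :: "nat \<Rightarrow> real"
  assumes p: "p \<longlonglongrightarrow> 0" "\<And>N. 0 < p N"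
    and s: "filterlim (\<lambda>N. p N * real N) at_top sequentially" and u: "0 \<le> u"
  shows "(\<lambda>N. ratio_tail (p N) N (u / (p N * real N))) \<longlonglongrightarrow> exp (- u)"
proof (rule ratio_tail_tendsto_exp[OF p])
  define s where "s N = p N * real N" for N
  have s_inv: "(\<lambda>N. inverse (s N)) \<longlonglongrightarrow> 0"
    using s unfolding s_def by (rule tendsto_inverse_0_at_top)
  have u_lt: "\<forall>\<^sub>F N in sequentially. u < s N"
    using s unfolding s_def filterlim_at_top_dense by blast
  then show "\<forall>\<^sub>F N in sequentially. 0 \<le> u / (p N * real N) \<and> u / (p N * real N) < 1"
    by eventually_elim (use u in \<open>auto simp: s_def\<close>)
  have "(\<lambda>N. u * (1 - p N * inverse (s N)) / (1 - u * inverse (s N))) \<longlonglongrightarrow> u * (1 - 0 * 0) / (1 - u * 0)"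
    by (intro tendsto_intros p s_inv) auto
  moreover have "\<forall>\<^sub>F N in sequentially. u * (1 - p N * inverse (s N)) / (1 - u * inverse (s N))
      = p N * (real N - 1) * (u / (p N * real N) / (1 - u / (p N * real N)))"
    using u_lt eventually_ge_at_top[of 1]
  proof eventually_elim
    case (elim N)
    then have "0 < s N" "s N \<noteq> u"
      using u by auto
    then show ?case
      using p(2)[of N] elim by (simp add: s_def field_simps)
  qed
  ultimately show "(\<lambda>N. p N * (real N - 1) * (u / (p N * real N) / (1 - u / (p N * real N)))) \<longlonglongrightarrow> u"
    using Lim_transform_eventually by fastforce
qed

lemma scaled_param_tendsto_at_top:
  assumes "0 < \<kappa>" "\<beta> < 1"
  shows "filterlim (\<lambda>N. geom_param \<kappa> \<beta> N * real N) at_top sequentially"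
proof -
  have "(\<lambda>N. \<kappa> powr \<beta> * real N powr (\<beta> - 1)) \<longlonglongrightarrow> \<kappa> powr \<beta> * 0"
    using assms by (intro tendsto_intros tendsto_neg_powr filterlim_real_sequentially) auto
  moreover have "\<forall>\<^sub>F N in sequentially. \<kappa> powr \<beta> * real N powr (\<beta> - 1) = inverse (geom_param \<kappa> \<beta> N * real N)"
    using eventually_gt_at_top[of 0]
    by eventually_elim (use assms(1) in \<open>simp add: geom_param_mult_N powr_minus[symmetric] inverse_mult_distrib\<close>)
  ultimately have "(\<lambda>N. inverse (geom_param \<kappa> \<beta> N * real N)) \<longlonglongrightarrow> 0"
    using Lim_transform_eventually by fastforce
  moreover have "\<forall>\<^sub>F N in sequentially. 0 < inverse (geom_param \<kappa> \<beta> N * real N)"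
    using eventually_gt_at_top[of 0] by eventually_elim (simp add: geom_param_pos)
  ultimately have "filterlim (\<lambda>N. inverse (inverse (geom_param \<kappa> \<beta> N * real N))) at_top sequentially"
    by (rule filterlim_inverse_at_top)
  then show ?thesis
    by simp
qed

lemma scaled_power_M_tendsto_fact:
  assumes "0 < \<kappa>" "0 < \<beta>" "\<beta> < 1" "1 \<le> n"
  shows "(\<lambda>N. (geom_param \<kappa> \<beta> N * real N) ^ n * M \<kappa> \<beta> N n) \<longlonglongrightarrow> fact n"
proof -
  define p where "p = geom_param \<kappa> \<beta>"
  define g where "g N u = indicator {0..} u * (real n * u ^ (n - 1)) * ratio_tail (p N) N (u / (p N * real N))"
    for N and u :: real
  have p0: "p \<longlonglongrightarrow> 0"
    unfolding p_def using assms(1,2) by (rule geom_param_tendsto_0)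
  have p_pos: "0 < p N" for N
    by (simp add: p_def geom_param_pos)
  have "(\<lambda>N. \<integral>u. g N u \<partial>lborel) \<longlonglongrightarrow> (\<integral>u. indicator {0..} u * (real n * u ^ (n - 1)) * exp (- u) \<partial>lborel)"
  proof (rule integral_dominated_convergence_eventually)
    show "(\<lambda>u. indicator {0..} u * (real n * u ^ (n - 1)) * exp (- u)) \<in> borel_measurable lborel"
      "g N \<in> borel_measurable lborel" for N
      unfolding g_def[abs_def] measurable_lborel2 by measurable
    show "integrable lborel (\<lambda>u. exp 1 * real n * (indicator {0..} u * u ^ (n - 1) * exp (- (1 / 2 * u))))"
      by (intro integrable_mult_right integrable_power_mult_exp_Ici) simp
    have s_top: "filterlim (\<lambda>N. p N * real N) at_top sequentially"
      unfolding p_def using assms(1,3) by (rule scaled_param_tendsto_at_top)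
    show "AE u in lborel. (\<lambda>N. g N u) \<longlonglongrightarrow> indicator {0..} u * (real n * u ^ (n - 1)) * exp (- u)"
    proof (rule AE_I2)
      fix u :: real
      show "(\<lambda>N. g N u) \<longlonglongrightarrow> indicator {0..} u * (real n * u ^ (n - 1)) * exp (- u)"
        using s_top p0 p_pos
        by (cases "0 \<le> u") (auto simp: g_def intro!: tendsto_mult_left ratio_tail_rescaled_tendsto)
    qed
    have "\<forall>\<^sub>F N in sequentially. p N < 1"
      using order_tendstoD(2)[OF p0, of 1] by simp
    then show "\<forall>\<^sub>F N in sequentially. \<forall>u. \<bar>g N u\<bar>
        \<le> exp 1 * real n * (indicator {0..} u * u ^ (n - 1) * exp (- (1 / 2 * u)))"
      using eventually_ge_at_top[of 2]
      unfolding g_def by eventually_elim (intro allI abs_rescaled_integrand_le p_pos; simp)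
  qed
  moreover have "\<forall>\<^sub>F N in sequentially. (\<integral>u. g N u \<partial>lborel) = (geom_param \<kappa> \<beta> N * real N) ^ n * M \<kappa> \<beta> N n"
    using eventually_ge_at_top[of 1]
    by eventually_elim (simp add: g_def p_def scaled_power_M_eq_integral[OF _ assms(4)])
  moreover have "(\<integral>u. indicator {0..} u * (real n * u ^ (n - 1)) * exp (- u) \<partial>lborel) = fact n"
    using integral_power_mult_exp_Ici[of "n - 1"] assms(4)
    by (simp add: mult_ac fact_reduce[of n])
  ultimately show ?thesis
    using Lim_transform_eventually by fastforce
qed

lemma scaled_param_power_eq:
  assumes "0 < \<kappa>" "0 < N"
  shows "(geom_param \<kappa> \<beta> N * real N) ^ n
       = inverse (\<kappa> powr (real n * \<beta>) * real N powr (- (real n * (1 - \<beta>))))"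
  using assms
  by (simp add: geom_param_mult_N power_mult_distrib powr_power powr_minus inverse_mult_distrib
      power_inverse)

lemma M_asymp_equiv:
  assumes "0 < \<kappa>" "0 < \<beta>" "\<beta> < 1"
  shows "(\<lambda>N. M \<kappa> \<beta> N n) \<sim>[at_top]
    (\<lambda>N. fact n * \<kappa> powr (real n * \<beta>) * real N powr (- (real n * (1 - \<beta>))))"
proof (cases "n = 0")
  case True
  have "\<forall>\<^sub>F N in at_top. M \<kappa> \<beta> N n = fact n * \<kappa> powr (real n * \<beta>) * real N powr (- (real n * (1 - \<beta>)))"
    using eventually_gt_at_top[of 0] by eventually_elim (use assms(1) in \<open>simp add: True\<close>)
  then show ?thesis
    by (rule asymp_equiv_refl_ev)
next
  case False
  have "(\<lambda>N. (geom_param \<kappa> \<beta> N * real N) ^ n * M \<kappa> \<beta> N n / fact n) \<longlonglongrightarrow> fact n / fact n"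
    using assms False by (intro tendsto_divide scaled_power_M_tendsto_fact tendsto_const) auto
  moreover have "\<forall>\<^sub>F N in sequentially. (geom_param \<kappa> \<beta> N * real N) ^ n * M \<kappa> \<beta> N n / fact n
      = M \<kappa> \<beta> N n / (fact n * \<kappa> powr (real n * \<beta>) * real N powr (- (real n * (1 - \<beta>))))"
    using eventually_gt_at_top[of 0]
  proof eventually_elim
    case (elim N)
    with assms(1) show ?case
      by (subst scaled_param_power_eq) (simp_all add: field_simps)
  qed
  ultimately show ?thesis
    by (intro asymp_equivI') (simp add: Lim_transform_eventually)
qed

theorem lemma3p1:
  fixes \<kappa> \<beta> :: real and n :: nat
  assumes "\<kappa> > 0" and "\<beta> > 0"
  shows "(\<beta> > 1 \<longrightarrow> ((\<lambda>N. M \<kappa> \<beta> N n) \<longlonglongrightarrow> 1))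
    \<and> (\<beta> = 1 \<longrightarrow> (\<forall>(P :: 'a measure) (Y :: 'a \<Rightarrow> real).
          prob_space P \<longrightarrow> Y \<in> borel_measurable P
          \<longrightarrow> (\<forall>\<omega>\<in>space P. 0 \<le> Y \<omega> \<and> Y \<omega> \<le> 1)
          \<longrightarrow> (\<forall>x. 0 \<le> x \<and> x < 1 \<longrightarrow>
                 measure P {\<omega>\<in>space P. Y \<omega> > x} = exp (- (x / (\<kappa> * (1 - x)))))
          \<longrightarrow> ((\<lambda>N. M \<kappa> \<beta> N n) \<longlonglongrightarrow> (\<integral>\<omega>. Y \<omega> ^ n \<partial>P))))
    \<and> (\<beta> < 1 \<longrightarrow> (\<lambda>N. M \<kappa> \<beta> N n) \<sim>[at_top]
          (\<lambda>N. fact n * \<kappa> powr (real n * \<beta>) * real N powr (- (real n * (1 - \<beta>)))))"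
proof (intro conjI impI allI)
  show "(\<lambda>N. M \<kappa> \<beta> N n) \<longlonglongrightarrow> 1" if "\<beta> > 1"
    using assms(1) that by (rule M_tendsto_1)
  show "(\<lambda>N. M \<kappa> \<beta> N n) \<longlonglongrightarrow> (\<integral>\<omega>. Y \<omega> ^ n \<partial>P)"
    if "\<beta> = 1" "prob_space P" "Y \<in> borel_measurable P" "\<forall>\<omega>\<in>space P. 0 \<le> Y \<omega> \<and> Y \<omega> \<le> 1"
      "\<forall>x. 0 \<le> x \<and> x < 1 \<longrightarrow> measure P {\<omega>\<in>space P. Y \<omega> > x} = exp (- (x / (\<kappa> * (1 - x))))"
    for P :: "'a measure" and Y
    using that by (auto intro!: M_tendsto_moment assms(1))
  show "(\<lambda>N. M \<kappa> \<beta> N n) \<sim>[at_top] (\<lambda>N. fact n * \<kappa> powr (real n * \<beta>) * real N powr (- (real n * (1 - \<beta>))))"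
    if "\<beta> < 1"
    using assms that by (rule M_asymp_equiv)
qed

end
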